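(* Let $G$ be a group, $K$ a subgroup that is a retract of $G$ with retraction $\phi$, and $L,R$ nonempty subsets of $G$. Then $2\mathrm{S}(G;L,R)$ is weakly connected if and only if $2\mathrm{S}(K;\phi(L),\phi(R))$ is weakly connected and any two elements of $\ker\phi$ are weakly connected to each other in $2\mathrm{S}(G;L,R)$.
   Context: For nonempty subsets $L,R$ of a group $G$, the two-sided group digraph $2\mathrm{S}(G;L,R)$ has vertex set $G$ and a directed arc $(g,h)$ if and only if $h=l^{-1}gr$ for some $l\in L$, $r\in R$. Vertex $g$ is weakly connected to $h$ if there is a sequence $g=g_0,\dots,g_n=h$ with, for each $i$, $(g_{i-1},g_i)$ or $(g_i,g_{i-1})$ an arc (the intermediate vertices may be arbitrary elements of $G$); a digraph is weakly connected if every pair of vertices is weakly connected. A subgroup $K$ of $G$ is a retract of $G$ with retraction $\phi$ if $\phi:G\to G$ is a group homomorphism with $\phi(g)\in K$ for all $g\in G$ and $\phi(k)=k$ for all $k\in K$ (equivalently, $G=\ker\phi\rtimes K$). *)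

theory Defs
  imports "HOL-Algebra.Algebra"
begin

definition two_sided_arc :: "('a, 'b) monoid_scheme \<Rightarrow> 'a set \<Rightarrow> 'a set \<Rightarrow> 'a \<Rightarrow> 'a \<Rightarrow> bool" where
  "two_sided_arc G L R g h \<longleftrightarrow> g \<in> carrier G \<and> h \<in> carrier G \<and>
     (\<exists>l\<in>L. \<exists>r\<in>R. h = inv\<^bsub>G\<^esub> l \<otimes>\<^bsub>G\<^esub> g \<otimes>\<^bsub>G\<^esub> r)"

definition weakly_connected_to :: "('a, 'b) monoid_scheme \<Rightarrow> 'a set \<Rightarrow> 'a set \<Rightarrow> 'a \<Rightarrow> 'a \<Rightarrow> bool" where
  "weakly_connected_to G L R g h \<longleftrightarrow>
     (\<lambda>x y. two_sided_arc G L R x y \<or> two_sided_arc G L R y x)\<^sup>*\<^sup>* g h"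

definition weakly_connected_2S :: "('a, 'b) monoid_scheme \<Rightarrow> 'a set \<Rightarrow> 'a set \<Rightarrow> bool" where
  "weakly_connected_2S G L R \<longleftrightarrow>
     (\<forall>g\<in>carrier G. \<forall>h\<in>carrier G. weakly_connected_to G L R g h)"

definition retraction :: "('a, 'b) monoid_scheme \<Rightarrow> 'a set \<Rightarrow> ('a \<Rightarrow> 'a) \<Rightarrow> bool" where
  "retraction G K \<phi> \<longleftrightarrow> \<phi> \<in> hom G G \<and> (\<forall>g\<in>carrier G. \<phi> g \<in> K) \<and> (\<forall>k\<in>K. \<phi> k = k)"

end

theory Submission
  imports Defs
begin

text \<open>The retraction \<phi> maps arcs of 2S(G;L,R) to arcs of 2S(K;\<phi>(L),\<phi>(R)), so it maps weak
  components into weak components. Conversely every arc of 2S(K;\<phi>(L),\<phi>(R)) at \<phi>(g) lifts to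
  an arc at g, in the same direction, since \<phi> is a homomorphism. Hence, if 2S(K;\<phi>(L),\<phi>(R)) is
  weakly connected, lifting a walk from \<phi>(g) to 1 connects every g to some element of
  ker \<phi>; so weak connectivity of 2S(G;L,R) reduces to that of the kernel.\<close>

lemma weakly_connected_to_refl: "weakly_connected_to G L R g g"
  unfolding weakly_connected_to_def by simp

lemma weakly_connected_to_sym:
  assumes "weakly_connected_to G L R g h"
  shows "weakly_connected_to G L R h g"
proof -
  let ?E = "\<lambda>x y. two_sided_arc G L R x y \<or> two_sided_arc G L R y x"
  have "conversep ?E = ?E" by (auto simp: fun_eq_iff)
  then show ?thesis
    using assms rtranclp_converseI[of ?E g h] unfolding weakly_connected_to_def by simp
qed

lemma weakly_connected_to_trans:
  "weakly_connected_to G L R g h \<Longrightarrow> weakly_connected_to G L R h k \<Longrightarrow>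
   weakly_connected_to G L R g k"
  unfolding weakly_connected_to_def by (rule rtranclp_trans)

lemma weakly_connected_to_arc_step:
  assumes "weakly_connected_to G L R g h"
    and "two_sided_arc G L R h k \<or> two_sided_arc G L R k h"
  shows "weakly_connected_to G L R g k"
  using assms unfolding weakly_connected_to_def by (rule rtranclp.rtrancl_into_rtrancl)

lemma (in group) two_sided_arc_subgroup_iff:
  assumes "subgroup K G" and "L \<subseteq> K"
  shows "two_sided_arc (G\<lparr>carrier := K\<rparr>) L R x y \<longleftrightarrow>
         x \<in> K \<and> y \<in> K \<and> (\<exists>l\<in>L. \<exists>r\<in>R. y = inv l \<otimes> x \<otimes> r)"
proof -
  have "\<And>l. l \<in> L \<Longrightarrow> inv\<^bsub>G\<lparr>carrier := K\<rparr>\<^esub> l = inv l"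
    using m_inv_consistent[OF assms(1)] assms(2) by auto
  then show ?thesis unfolding two_sided_arc_def by auto
qed

lemma (in group) two_sided_translate_cancel:
  assumes "a \<in> carrier G" "b \<in> carrier G" "z \<in> carrier G"
  shows "inv a \<otimes> (a \<otimes> z \<otimes> inv b) \<otimes> b = z"
  using assms by (simp add: m_assoc[symmetric]) (simp add: m_assoc)

locale two_sided_retract = group G for G (structure) +
  fixes K :: "'a set" and \<phi> :: "'a \<Rightarrow> 'a" and L R :: "'a set"
  assumes subgroup_K: "subgroup K G"
    and retraction: "retraction G K \<phi>"
    and L_carrier: "L \<subseteq> carrier G"
    and R_carrier: "R \<subseteq> carrier G"
begin

abbreviation (input) "K_group \<equiv> G\<lparr>carrier := K\<rparr>"

sublocale hom: group_hom G G \<phi>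
  using retraction is_group unfolding retraction_def group_hom_def group_hom_axioms_def by auto

lemma retraction_in_K: "g \<in> carrier G \<Longrightarrow> \<phi> g \<in> K"
  using retraction unfolding retraction_def by auto

lemma retraction_fixes_K: "k \<in> K \<Longrightarrow> \<phi> k = k"
  using retraction unfolding retraction_def by auto

lemma K_carrier: "K \<subseteq> carrier G"
  using subgroup.subset[OF subgroup_K] .

lemma image_L_subset_K: "\<phi> ` L \<subseteq> K"
  using L_carrier retraction_in_K by auto

lemma two_sided_arc_K_iff:
  "two_sided_arc K_group (\<phi> ` L) (\<phi> ` R) x y \<longleftrightarrow>
   x \<in> K \<and> y \<in> K \<and> (\<exists>l\<in>L. \<exists>r\<in>R. y = inv (\<phi> l) \<otimes> x \<otimes> \<phi> r)"
  by (auto simp: two_sided_arc_subgroup_iff[OF subgroup_K image_L_subset_K])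

lemma two_sided_arc_image:
  assumes "two_sided_arc G L R g h"
  shows "two_sided_arc K_group (\<phi> ` L) (\<phi> ` R) (\<phi> g) (\<phi> h)"
proof -
  obtain l r where lr: "l \<in> L" "r \<in> R" "g \<in> carrier G" "h \<in> carrier G"
    "h = inv l \<otimes> g \<otimes> r"
    using assms unfolding two_sided_arc_def by auto
  moreover have "l \<in> carrier G" "r \<in> carrier G" using lr L_carrier R_carrier by auto
  ultimately have "\<phi> h = inv (\<phi> l) \<otimes> \<phi> g \<otimes> \<phi> r" by simp
  moreover have "\<phi> g \<in> K" "\<phi> h \<in> K" using lr retraction_in_K by simp_all
  ultimately show ?thesis unfolding two_sided_arc_K_iff using lr(1,2) by blast
qed

lemma weakly_connected_to_image:
  assumes "weakly_connected_to G L R g h"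
  shows "weakly_connected_to K_group (\<phi> ` L) (\<phi> ` R) (\<phi> g) (\<phi> h)"
  using assms unfolding weakly_connected_to_def
proof (induction rule: rtranclp_induct)
  case (step h k)
  then show ?case
    using two_sided_arc_image by (metis (no_types, lifting) rtranclp.rtrancl_into_rtrancl)
qed simp

lemma two_sided_arc_lift:
  assumes "g \<in> carrier G" and "two_sided_arc K_group (\<phi> ` L) (\<phi> ` R) (\<phi> g) y"
  shows "\<exists>h. \<phi> h = y \<and> two_sided_arc G L R g h"
proof -
  obtain l r where lr: "l \<in> L" "r \<in> R" "y = inv (\<phi> l) \<otimes> \<phi> g \<otimes> \<phi> r"
    using assms(2) unfolding two_sided_arc_K_iff by auto
  then have "l \<in> carrier G" "r \<in> carrier G" using L_carrier R_carrier by auto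
  with assms(1) lr show ?thesis
    by (intro exI[of _ "inv l \<otimes> g \<otimes> r"]) (auto simp: two_sided_arc_def)
qed

lemma two_sided_arc_lift_converse:
  assumes "g \<in> carrier G" and "two_sided_arc K_group (\<phi> ` L) (\<phi> ` R) y (\<phi> g)"
  shows "\<exists>h. \<phi> h = y \<and> two_sided_arc G L R h g"
proof -
  obtain l r where lr: "l \<in> L" "r \<in> R" "y \<in> K" "\<phi> g = inv (\<phi> l) \<otimes> y \<otimes> \<phi> r"
    using assms(2) unfolding two_sided_arc_K_iff by auto
  then have c: "l \<in> carrier G" "r \<in> carrier G" "y \<in> carrier G"
    using L_carrier R_carrier K_carrier by auto
  define h where "h = l \<otimes> g \<otimes> inv r"
  have "\<phi> h = \<phi> l \<otimes> (inv (\<phi> l) \<otimes> y \<otimes> \<phi> r) \<otimes> inv (\<phi> r)"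
    unfolding h_def using c assms(1) lr(4) by simp
  also have "\<dots> = y"
    using two_sided_translate_cancel[of "inv (\<phi> l)" "inv (\<phi> r)" y] c by simp
  finally have "\<phi> h = y" .
  moreover have "g = inv l \<otimes> h \<otimes> r"
    unfolding h_def using two_sided_translate_cancel c assms(1) by simp
  moreover have "h \<in> carrier G" unfolding h_def using c assms(1) by simp
  ultimately show ?thesis
    using assms(1) lr(1,2) unfolding two_sided_arc_def by blast
qed

lemma weakly_connected_to_lift:
  assumes "weakly_connected_to K_group (\<phi> ` L) (\<phi> ` R) (\<phi> g) y" and "g \<in> carrier G"
  shows "\<exists>h\<in>carrier G. \<phi> h = y \<and> weakly_connected_to G L R g h"
  using assms(1) unfolding weakly_connected_to_def [of K_group]
proof (induction rule: rtranclp_induct)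
  case base
  then show ?case using assms(2) weakly_connected_to_refl[of G L R g] by blast
next
  case (step y z)
  obtain h where h: "h \<in> carrier G" "\<phi> h = y" "weakly_connected_to G L R g h"
    using step.IH by blast
  have "\<exists>h'. \<phi> h' = z \<and> (two_sided_arc G L R h h' \<or> two_sided_arc G L R h' h)"
    using step.hyps(2)
  proof
    assume "two_sided_arc K_group (\<phi> ` L) (\<phi> ` R) y z"
    then show ?thesis using two_sided_arc_lift[OF h(1)] h(2) by blast
  next
    assume "two_sided_arc K_group (\<phi> ` L) (\<phi> ` R) z y"
    then show ?thesis using two_sided_arc_lift_converse[OF h(1)] h(2) by blast
  qed
  then obtain h' where "\<phi> h' = z"
    and arc: "two_sided_arc G L R h h' \<or> two_sided_arc G L R h' h"
    by blast
  moreover have "h' \<in> carrier G"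
    using arc unfolding two_sided_arc_def by auto
  moreover have "weakly_connected_to G L R g h'"
    using weakly_connected_to_arc_step[OF h(3) arc] .
  ultimately show ?case by blast
qed

lemma weakly_connected_to_kernel:
  assumes "weakly_connected_2S K_group (\<phi> ` L) (\<phi> ` R)" and "g \<in> carrier G"
  shows "\<exists>n\<in>kernel G G \<phi>. weakly_connected_to G L R g n"
proof -
  have "weakly_connected_to K_group (\<phi> ` L) (\<phi> ` R) (\<phi> g) \<one>"
    using assms subgroup.one_closed[OF subgroup_K] retraction_in_K
    unfolding weakly_connected_2S_def by auto
  then obtain n where "n \<in> carrier G" "\<phi> n = \<one>" "weakly_connected_to G L R g n"
    using weakly_connected_to_lift[OF _ assms(2)] by blast
  then show ?thesis unfolding kernel_def by auto
qed

lemma weakly_connected_2S_retract: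
  assumes "weakly_connected_2S G L R"
  shows "weakly_connected_2S K_group (\<phi> ` L) (\<phi> ` R)"
  unfolding weakly_connected_2S_def
proof (intro ballI)
  fix x y assume "x \<in> carrier K_group" "y \<in> carrier K_group"
  then have xy: "x \<in> K" "y \<in> K" by simp_all
  then have "weakly_connected_to G L R x y"
    using assms K_carrier unfolding weakly_connected_2S_def by blast
  then show "weakly_connected_to K_group (\<phi> ` L) (\<phi> ` R) x y"
    using weakly_connected_to_image retraction_fixes_K xy by metis
qed

lemma weakly_connected_2S_if_kernel_connected:
  assumes "weakly_connected_2S K_group (\<phi> ` L) (\<phi> ` R)"
    and kernel_conn: "\<forall>n\<in>kernel G G \<phi>. \<forall>m\<in>kernel G G \<phi>. weakly_connected_to G L R n m"
  shows "weakly_connected_2S G L R"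
  unfolding weakly_connected_2S_def
proof (intro ballI)
  fix g h assume "g \<in> carrier G" "h \<in> carrier G"
  then obtain n m where "n \<in> kernel G G \<phi>" "weakly_connected_to G L R g n"
    and "m \<in> kernel G G \<phi>" "weakly_connected_to G L R h m"
    using weakly_connected_to_kernel[OF assms(1)] by blast
  then show "weakly_connected_to G L R g h"
    using kernel_conn weakly_connected_to_sym weakly_connected_to_trans by metis
qed

end

theorem mainTheorem18:
  fixes G (structure) and K :: "'a set" and \<phi> :: "'a \<Rightarrow> 'a" and L R :: "'a set"
  assumes "group G"
    and "subgroup K G"
    and "retraction G K \<phi>"
    and "L \<subseteq> carrier G" and "L \<noteq> {}"
    and "R \<subseteq> carrier G" and "R \<noteq> {}"
  shows "weakly_connected_2S G L R \<longleftrightarrow>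
           (weakly_connected_2S (G\<lparr>carrier := K\<rparr>) (\<phi> ` L) (\<phi> ` R) \<and>
            (\<forall>g\<in>kernel G G \<phi>. \<forall>h\<in>kernel G G \<phi>. weakly_connected_to G L R g h))"
proof -
  interpret two_sided_retract G K \<phi> L R
    using assms by (simp add: two_sided_retract_def two_sided_retract_axioms_def)
  show ?thesis
    using weakly_connected_2S_retract weakly_connected_2S_if_kernel_connected
    unfolding weakly_connected_2S_def kernel_def by auto
qed

end
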